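(* Let $X$ be a real Banach space and $T:X\rightrightarrows X^*$ maximal monotone. For any $h\in\mathcal{F}_T$, $$\mathrm{cl}\,P_1D(h)=\mathrm{cl}\,\mathrm{conv}\,D(T),\qquad\mathrm{cl}_{w*}P_2D(h)=\mathrm{cl}_{w*}\mathrm{conv}\,R(T).$$
   Context: An operator $T:X\rightrightarrows X^*$ is a subset of $X\times X^*$ with $D(T)=P_1T$, $R(T)=P_2T$, where $P_1,P_2$ are the canonical projections onto $X$ and $X^*$. $T$ is monotone if $\langle x-y,x^*-y^*\rangle\geq0$ for all $(x,x^* ),(y,y^* )\in T$, and maximal monotone if it is monotone and not properly contained in another monotone operator. $\mathcal{F}_T$ is the set of all convex lower semicontinuous $h:X\times X^*\to\mathbb{R}\cup\{\pm\infty\}$ with $h(x,x^* )\geq\langle x,x^*\rangle$ for all $(x,x^* )$ and $h(x,x^* )=\langle x,x^*\rangle$ on $T$. $D(h)=\{z\;|\;h(z)<\infty\}$. $\mathrm{cl}$ is norm closure in $X$, $\mathrm{cl}_{w*}$ weak-$*$ closure in $X^*$, $\mathrm{conv}$ convex hull. *)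

theory Defs
  imports "HOL-Analysis.Analysis"
begin

text \<open>The dual space X* is modelled as the type of bounded linear functionals
  'a \<Rightarrow>L real; the duality pairing is blinfun_apply.\<close>

definition pairing :: "'a::real_normed_vector \<Rightarrow> ('a \<Rightarrow>\<^sub>L real) \<Rightarrow> real" where
  "pairing x xs = blinfun_apply xs x"

definition monotone_op :: "('a::real_normed_vector \<times> ('a \<Rightarrow>\<^sub>L real)) set \<Rightarrow> bool" where
  "monotone_op T \<longleftrightarrow>
     (\<forall>(x, xs)\<in>T. \<forall>(y, ys)\<in>T. pairing (x - y) (xs - ys) \<ge> 0)"

definition maximal_monotone :: "('a::real_normed_vector \<times> ('a \<Rightarrow>\<^sub>L real)) set \<Rightarrow> bool" where
  "maximal_monotone T \<longleftrightarrow> monotone_op T \<and> (\<forall>S. monotone_op S \<and> T \<subseteq> S \<longrightarrow> S = T)"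

text \<open>Weak-* topology on X*: the coarsest topology making all evaluations continuous,
  i.e. the pullback of the product (pointwise) topology on 'a \<Rightarrow> real.\<close>

definition weak_star_topology :: "('a::real_normed_vector \<Rightarrow>\<^sub>L real) topology" where
  "weak_star_topology = pullback_topology UNIV blinfun_apply euclidean"

definition weak_star_closure :: "('a::real_normed_vector \<Rightarrow>\<^sub>L real) set \<Rightarrow> ('a \<Rightarrow>\<^sub>L real) set" where
  "weak_star_closure S = weak_star_topology closure_of S"

definition convex_ext :: "('b::real_vector \<Rightarrow> ereal) \<Rightarrow> bool" where
  "convex_ext h \<longleftrightarrow> convex {(z, t::real). h z \<le> ereal t}"

definition lsc_ext :: "('b::topological_space \<Rightarrow> ereal) \<Rightarrow> bool" where
  "lsc_ext h \<longleftrightarrow> (\<forall>c. closed {z. h z \<le> c})"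

definition fitzpatrick_family ::
  "('a::real_normed_vector \<times> ('a \<Rightarrow>\<^sub>L real)) set \<Rightarrow> (('a \<times> ('a \<Rightarrow>\<^sub>L real)) \<Rightarrow> ereal) set" where
  "fitzpatrick_family T = {h. convex_ext h \<and> lsc_ext h \<and>
      (\<forall>x xs. h (x, xs) \<ge> ereal (pairing x xs)) \<and>
      (\<forall>(x, xs)\<in>T. h (x, xs) = ereal (pairing x xs))}"

definition effdom :: "('b \<Rightarrow> ereal) \<Rightarrow> 'b set" where
  "effdom h = {z. h z < \<infinity>}"

end

theory Submission
  imports Defs
begin

text \<open>Hahn--Banach is used in the Mazur--Orlicz form: a sublinear \<open>p\<close> has a linear minorant
  \<open>F \<le> p\<close> with \<open>F \<ge> \<alpha>\<close> on any convex set on which \<open>p \<ge> \<alpha>\<close>. If \<open>x \<in> P\<^sub>1 D(h)\<close> lay outside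
  \<open>cl conv D(T)\<close>, such an \<open>F\<close> (with \<open>p = norm\<close>) would separate \<open>x\<close> from \<open>conv D(T)\<close> with a positive
  margin. Convexity of \<open>h\<close> and \<open>h \<ge> \<langle>\<cdot>,\<cdot>\<rangle>\<close> give \<open>\<langle>x - a, x\<^sup>* - a\<^sup>*\<rangle> \<ge> \<langle>x, x\<^sup>*\<rangle> - h(x, x\<^sup>*)\<close>
  on \<open>T\<close>, so \<open>(x, x\<^sup>* + s F)\<close> is monotonically related to \<open>T\<close> for large \<open>s\<close>, and maximality
  puts \<open>x\<close> into \<open>D(T)\<close>: a contradiction. The dual statement is the same argument with the roles
  of \<open>X\<close> and \<open>X\<^sup>*\<close> exchanged: a weak-* neighbourhood is described by finitely many points
  of \<open>X\<close>, so the separating functional on \<open>X\<^sup>*\<close> is the evaluation at a point of \<open>X\<close>.\<close>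

definition sublinear :: "('v::real_vector \<Rightarrow> real) \<Rightarrow> bool" where
  "sublinear p \<longleftrightarrow>
     (\<forall>x y. p (x + y) \<le> p x + p y) \<and> (\<forall>c x. 0 < c \<longrightarrow> p (c *\<^sub>R x) = c * p x)"

lemma sublinearI:
  assumes "\<And>x y. p (x + y) \<le> p x + p y"
    and "\<And>c x. 0 < c \<Longrightarrow> p (c *\<^sub>R x) \<le> c * p x"
  shows "sublinear p"
proof -
  have "p (c *\<^sub>R x) = c * p x" if "0 < c" for c x
  proof (rule antisym)
    have "p x = p (inverse c *\<^sub>R (c *\<^sub>R x))"
      using that by simp
    also have "\<dots> \<le> inverse c * p (c *\<^sub>R x)"
      using assms(2)[of "inverse c" "c *\<^sub>R x"] that by (simp del: scaleR_scaleR)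
    finally show "c * p x \<le> p (c *\<^sub>R x)"
      using that by (simp add: field_simps)
  qed (use assms(2) that in blast)
  with assms(1) show ?thesis
    unfolding sublinear_def by blast
qed

lemma sublinear_add: "sublinear p \<Longrightarrow> p (x + y) \<le> p x + p y"
  by (simp add: sublinear_def)

lemma sublinear_zero:
  assumes "sublinear p"
  shows "p 0 = 0"
proof -
  have "p (2 *\<^sub>R 0) = 2 * p 0"
    using assms unfolding sublinear_def by (metis zero_less_numeral)
  then show ?thesis
    by simp
qed

lemma sublinear_scaleR: "sublinear p \<Longrightarrow> 0 \<le> c \<Longrightarrow> p (c *\<^sub>R x) = c * p x"
  by (cases "c = 0") (auto simp: sublinear_def sublinear_zero)

lemma sublinear_neg_le: "sublinear p \<Longrightarrow> - p (- x) \<le> p x"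
  using sublinear_add[of p x "- x"] sublinear_zero[of p] by simp

lemma sublinear_norm: "sublinear norm"
  by (rule sublinearI) (simp_all add: norm_triangle_ineq)

lemma sublinear_sum_abs:
  assumes "\<And>i. i \<in> I \<Longrightarrow> linear (\<phi> i)"
  shows "sublinear (\<lambda>z. \<Sum>i\<in>I. \<bar>\<phi> i z\<bar>)"
proof (rule sublinearI)
  show "(\<Sum>i\<in>I. \<bar>\<phi> i (x + y)\<bar>) \<le> (\<Sum>i\<in>I. \<bar>\<phi> i x\<bar>) + (\<Sum>i\<in>I. \<bar>\<phi> i y\<bar>)" for x y
    using assms by (simp add: linear_add abs_triangle_ineq sum.distrib[symmetric] sum_mono)
  show "(\<Sum>i\<in>I. \<bar>\<phi> i (c *\<^sub>R x)\<bar>) \<le> c * (\<Sum>i\<in>I. \<bar>\<phi> i x\<bar>)" if "0 < c" for c x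
    using assms that by (simp add: linear_scale abs_mult sum_distrib_left)
qed

lemma sublinear_INF:
  fixes g :: "'i \<Rightarrow> 'v::real_vector \<Rightarrow> real"
  assumes "I \<noteq> {}"
    and bdd: "\<And>x. bdd_below ((\<lambda>i. g i x) ` I)"
    and add: "\<And>i j x y. i \<in> I \<Longrightarrow> j \<in> I \<Longrightarrow> \<exists>k\<in>I. g k (x + y) \<le> g i x + g j y"
    and scale: "\<And>i c x. i \<in> I \<Longrightarrow> 0 < c \<Longrightarrow> \<exists>j\<in>I. g j (c *\<^sub>R x) \<le> c * g i x"
  shows "sublinear (\<lambda>x. INF i\<in>I. g i x)" (is "sublinear ?f")
proof -
  have le: "?f x \<le> g i x" if "i \<in> I" for i x
    by (rule cINF_lower[OF bdd that])
  show ?thesis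
  proof (rule sublinearI)
    fix x y
    have "?f (x + y) - g j y \<le> ?f x" if "j \<in> I" for j
    proof (rule cINF_greatest[OF \<open>I \<noteq> {}\<close>])
      fix i assume "i \<in> I"
      then obtain k where "k \<in> I" "g k (x + y) \<le> g i x + g j y"
        using add \<open>j \<in> I\<close> by blast
      then show "?f (x + y) - g j y \<le> g i x"
        using le[of k "x + y"] by simp
    qed
    then have "?f (x + y) - ?f x \<le> ?f y"
      by (intro cINF_greatest[OF \<open>I \<noteq> {}\<close>]) force
    then show "?f (x + y) \<le> ?f x + ?f y"
      by simp
  next
    fix c :: real and x assume "0 < c"
    have "?f (c *\<^sub>R x) / c \<le> ?f x"
    proof (rule cINF_greatest[OF \<open>I \<noteq> {}\<close>])
      fix i assume "i \<in> I"
      then obtain j where "j \<in> I" "g j (c *\<^sub>R x) \<le> c * g i x"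
        using scale \<open>0 < c\<close> by blast
      then show "?f (c *\<^sub>R x) / c \<le> g i x"
        using le[of j "c *\<^sub>R x"] \<open>0 < c\<close> by (simp add: divide_le_eq mult.commute)
    qed
    then show "?f (c *\<^sub>R x) \<le> c * ?f x"
      using \<open>0 < c\<close> by (simp add: divide_le_eq mult.commute)
  qed
qed

lemma sublinear_minorant_on_convex:
  fixes p :: "'v::real_vector \<Rightarrow> real"
  assumes p: "sublinear p" and K: "convex K" "K \<noteq> {}" and \<alpha>: "\<And>k. k \<in> K \<Longrightarrow> \<alpha> \<le> p k"
  shows "\<exists>q. sublinear q \<and> q \<le> p \<and> (\<forall>k\<in>K. q (- k) \<le> - \<alpha>)"
proof -
  define I where "I = {(s :: real, k). 0 \<le> s \<and> k \<in> K}"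
  define g where "g = (\<lambda>(s, k) x. p (x + s *\<^sub>R k) - s * \<alpha>)"
  define q where "q x = (INF i\<in>I. g i x)" for x
  obtain k0 where "k0 \<in> K"
    using K(2) by blast
  then have k0: "(0, k0) \<in> I"
    by (simp add: I_def)
  have lower: "- p (- x) \<le> g i x" if "i \<in> I" for i x
  proof -
    obtain s k where i: "i = (s, k)" "0 \<le> s" "k \<in> K"
      using \<open>i \<in> I\<close> by (auto simp: I_def)
    have "s * \<alpha> \<le> p (s *\<^sub>R k)"
      using sublinear_scaleR[OF p i(2)] \<alpha>[OF i(3)] i(2) by (simp add: mult_left_mono)
    also have "\<dots> \<le> p (x + s *\<^sub>R k) + p (- x)"
      using sublinear_add[OF p, of "x + s *\<^sub>R k" "- x"] by simp
    finally show ?thesis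
      by (simp add: g_def i(1))
  qed
  have "sublinear q"
    unfolding q_def
  proof (rule sublinear_INF)
    show "I \<noteq> {}"
      using k0 by blast
    show "bdd_below ((\<lambda>i. g i x) ` I)" for x
      using lower by (intro bdd_belowI2)
  next
    fix i j x y assume "i \<in> I" "j \<in> I"
    then obtain s k t l where ij: "i = (s, k)" "j = (t, l)" "0 \<le> s" "0 \<le> t" "k \<in> K" "l \<in> K"
      by (auto simp: I_def)
    show "\<exists>m\<in>I. g m (x + y) \<le> g i x + g j y"
    proof (cases "s + t = 0")
      case True
      then have "s = 0" "t = 0"
        using ij by auto
      then show ?thesis
        using ij sublinear_add[OF p, of x y] by (intro bexI[OF _ k0]) (simp add: g_def)
    next
      case False
      define m where "m = (s / (s + t)) *\<^sub>R k + (t / (s + t)) *\<^sub>R l"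
      have "m \<in> K"
        unfolding m_def using ij False by (intro convexD[OF K(1)]) (auto simp: add_divide_distrib[symmetric])
      moreover have "(s + t) *\<^sub>R m = s *\<^sub>R k + t *\<^sub>R l"
        using False by (simp add: m_def scaleR_add_right)
      then have "x + y + (s + t) *\<^sub>R m = (x + s *\<^sub>R k) + (y + t *\<^sub>R l)"
        by (simp add: algebra_simps)
      ultimately show ?thesis
        using ij sublinear_add[OF p, of "x + s *\<^sub>R k" "y + t *\<^sub>R l"]
        by (intro bexI[of _ "(s + t, m)"]) (auto simp: g_def I_def algebra_simps)
    qed
  next
    fix i and c :: real and x assume "i \<in> I" "0 < c"
    then obtain s k where i: "i = (s, k)" "0 \<le> s" "k \<in> K"
      by (auto simp: I_def)
    have "c *\<^sub>R x + (c * s) *\<^sub>R k = c *\<^sub>R (x + s *\<^sub>R k)"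
      by (simp add: algebra_simps)
    then have "g (c * s, k) (c *\<^sub>R x) = c * p (x + s *\<^sub>R k) - c * s * \<alpha>"
      using sublinear_scaleR[OF p, of c] \<open>0 < c\<close> by (simp add: g_def)
    then have "g (c * s, k) (c *\<^sub>R x) = c * g i x"
      by (simp add: g_def i(1) algebra_simps)
    moreover have "(c * s, k) \<in> I"
      using i \<open>0 < c\<close> by (simp add: I_def)
    ultimately show "\<exists>j\<in>I. g j (c *\<^sub>R x) \<le> c * g i x"
      by force
  qed
  moreover have "q \<le> p"
  proof (rule le_funI)
    fix x
    have "q x \<le> g (0, k0) x"
      unfolding q_def using lower k0 by (intro cINF_lower bdd_belowI2)
    then show "q x \<le> p x"
      by (simp add: g_def)
  qed
  moreover have "q (- k) \<le> - \<alpha>" if "k \<in> K" for k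
  proof -
    have "q (- k) \<le> g (1, k) (- k)"
      unfolding q_def using lower that by (intro cINF_lower bdd_belowI2) (auto simp: I_def)
    then show ?thesis
      by (simp add: g_def sublinear_zero[OF p])
  qed
  ultimately show ?thesis
    by blast
qed

lemma minimal_sublinear_imp_linear:
  assumes q: "sublinear q" and minimal: "\<And>r. sublinear r \<Longrightarrow> r \<le> q \<Longrightarrow> r = q"
  shows "linear q"
proof -
  have neg: "q (- a) = - q a" for a
  proof -
    obtain r where "sublinear r" "r \<le> q" "r (- a) \<le> - q a"
      using sublinear_minorant_on_convex[OF q, of "{a}" "q a"] by auto
    then have "q (- a) \<le> - q a"
      using minimal by blast
    then show ?thesis
      using sublinear_neg_le[OF q, of a] by simp
  qed
  show ?thesis
  proof (rule linearI)
    fix x y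
    have "q x \<le> q (x + y) + q (- y)"
      using sublinear_add[OF q, of "x + y" "- y"] by simp
    then show "q (x + y) = q x + q y"
      using sublinear_add[OF q, of x y] neg[of y] by simp
  next
    fix c :: real and x
    show "q (c *\<^sub>R x) = c *\<^sub>R q x"
    proof (cases "0 \<le> c")
      case True
      then show ?thesis
        using sublinear_scaleR[OF q] by simp
    next
      case False
      then have "q (c *\<^sub>R x) = - q ((- c) *\<^sub>R x)"
        using neg[of "(- c) *\<^sub>R x"] by simp
      then show ?thesis
        using sublinear_scaleR[OF q, of "- c"] False by simp
    qed
  qed
qed

theorem hahn_banach_sublinear:
  fixes p :: "'v::real_vector \<Rightarrow> real"
  assumes p: "sublinear p"
  shows "\<exists>F. linear F \<and> F \<le> p"
proof -
  define A where "A = {q. sublinear q \<and> q \<le> p}"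
  have "partial_order_on A (relation_of (\<ge>) A)"
    by (auto simp: relation_of_def partial_order_on_def preorder_on_def refl_on_def trans_def antisym_def)
  moreover have "\<exists>u\<in>A. \<forall>q\<in>C. u \<le> q" if C: "C \<in> Chains (relation_of (\<ge>) A)" for C
  proof (cases "C = {}")
    case True
    then show ?thesis
      using p by (auto simp: A_def)
  next
    case False
    have CA: "C \<subseteq> A" and total: "\<And>q r. q \<in> C \<Longrightarrow> r \<in> C \<Longrightarrow> q \<le> r \<or> r \<le> q"
      using C by (auto simp: Chains_def relation_of_def)
    have lower: "- p (- x) \<le> q x" if "q \<in> C" for q x
      using sublinear_neg_le[of q x] le_funD[of q p "- x"] CA that by (force simp: A_def)
    define u where "u x = (INF q\<in>C. q x)" for x
    have bdd: "bdd_below ((\<lambda>q. q x) ` C)" for x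
      using lower by (intro bdd_belowI2)
    have "sublinear u"
      unfolding u_def
    proof (rule sublinear_INF[OF False bdd])
      fix q r x y assume qr: "q \<in> C" "r \<in> C"
      then have "sublinear q" "sublinear r"
        using CA by (auto simp: A_def)
      show "\<exists>s\<in>C. s (x + y) \<le> q x + r y"
        using total[OF qr]
      proof
        assume "q \<le> r"
        then show ?thesis
          using qr sublinear_add[OF \<open>sublinear q\<close>, of x y] le_funD[of q r y]
          by (intro bexI[of _ q]) auto
      next
        assume "r \<le> q"
        then show ?thesis
          using qr sublinear_add[OF \<open>sublinear r\<close>, of x y] le_funD[of r q x]
          by (intro bexI[of _ r]) auto
      qed
    next
      fix q and c :: real and x assume "q \<in> C" "0 < c"
      then show "\<exists>r\<in>C. r (c *\<^sub>R x) \<le> c * q x"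
        using CA by (intro bexI[of _ q]) (auto simp: A_def sublinear_def)
    qed
    moreover have u_le: "u \<le> q" if "q \<in> C" for q
      using that bdd by (auto simp: u_def le_fun_def intro: cINF_lower)
    moreover have "u \<le> p"
      using False u_le CA by (force simp: A_def intro: order_trans)
    ultimately show ?thesis
      by (auto simp: A_def)
  qed
  ultimately obtain q where "q \<in> A" and maximal: "\<And>r. r \<in> A \<Longrightarrow> r \<le> q \<Longrightarrow> r = q"
    using predicate_Zorn[of A "(\<ge>)"] by auto
  then have "linear q"
    by (intro minimal_sublinear_imp_linear) (auto simp: A_def intro: order_trans)
  with \<open>q \<in> A\<close> show ?thesis
    by (auto simp: A_def)
qed

theorem mazur_orlicz:
  fixes p :: "'v::real_vector \<Rightarrow> real"
  assumes p: "sublinear p" and K: "convex K" and \<alpha>: "\<And>k. k \<in> K \<Longrightarrow> \<alpha> \<le> p k"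
  shows "\<exists>F. linear F \<and> F \<le> p \<and> (\<forall>k\<in>K. \<alpha> \<le> F k)"
proof (cases "K = {}")
  case True
  then show ?thesis
    using hahn_banach_sublinear[OF p] by auto
next
  case False
  obtain q where q: "sublinear q" "q \<le> p" "\<And>k. k \<in> K \<Longrightarrow> q (- k) \<le> - \<alpha>"
    using sublinear_minorant_on_convex[OF p K False \<alpha>] by blast
  obtain F where F: "linear F" "F \<le> q"
    using hahn_banach_sublinear[OF q(1)] by blast
  have "\<alpha> \<le> F k" if "k \<in> K" for k
    using le_funD[OF F(2), of "- k"] q(3)[OF that] linear_neg[OF F(1)] by simp
  with F q(2) show ?thesis
    by (auto intro: order_trans)
qed

corollary sublinear_separation:
  fixes p :: "'v::real_vector \<Rightarrow> real"
  assumes p: "sublinear p" and K: "convex K" and far: "\<And>k. k \<in> K \<Longrightarrow> e \<le> p (x - k)"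
  shows "\<exists>F. linear F \<and> F \<le> p \<and> (\<forall>k\<in>K. e \<le> F x - F k)"
proof -
  have "(\<lambda>k. x - k) ` K = (+) x ` uminus ` K"
    by (auto simp: image_image)
  then have "convex ((\<lambda>k. x - k) ` K)"
    using K by (simp add: convex_translation convex_negations)
  then obtain F where "linear F" "F \<le> p" "\<forall>k\<in>K. e \<le> F (x - k)"
    using mazur_orlicz[OF p, of "(\<lambda>k. x - k) ` K" e] far by auto
  then show ?thesis
    by (auto simp: linear_diff)
qed

lemma fitzpatrick_family_pairing_ge:
  assumes h: "h \<in> fitzpatrick_family T" and "(a, as) \<in> T" and hx: "h (x, xs) \<le> ereal r"
  shows "pairing x xs - r \<le> pairing (x - a) (xs - as)"
proof -
  have epi: "convex {(z, t::real). h z \<le> ereal t}"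
    and above: "\<And>z zs. ereal (pairing z zs) \<le> h (z, zs)"
    and "h (a, as) = ereal (pairing a as)"
    using h \<open>(a, as) \<in> T\<close> by (auto simp: fitzpatrick_family_def convex_ext_def)
  define d where "d = pairing x as + pairing a xs - pairing a as"
  define c where "c = pairing x xs - d"
  \<comment> \<open>convexity of \<open>h\<close> along the segment from \<open>(a, as)\<close> to \<open>(x, xs)\<close>, divided by \<open>t\<close>\<close>
  have segment: "d + t * c \<le> r" if t: "0 < t" "t \<le> 1" for t
  proof -
    have "((1 - t) *\<^sub>R (a, as) + t *\<^sub>R (x, xs), (1 - t) * pairing a as + t * r) \<in> {(z, t). h z \<le> ereal t}"
      using convexD[OF epi, of "((a, as), pairing a as)" "((x, xs), r)" "1 - t" t]
        \<open>h (a, as) = _\<close> hx t by simp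
    then have "pairing ((1 - t) *\<^sub>R a + t *\<^sub>R x) ((1 - t) *\<^sub>R as + t *\<^sub>R xs) \<le> (1 - t) * pairing a as + t * r"
      using above order_trans by fastforce
    then have "t * (d + t * c) \<le> t * r"
      by (simp add: pairing_def d_def c_def blinfun.bilinear_simps algebra_simps)
    then show ?thesis
      using t by simp
  qed
  have "((\<lambda>t. d + t * c) \<longlongrightarrow> d) (at_right 0)"
    by (auto intro!: tendsto_eq_intros)
  moreover have "\<forall>\<^sub>F t in at_right 0. d + t * c \<le> r"
    unfolding eventually_at_right_field using segment by (intro exI[of _ 1]) auto
  ultimately have "d \<le> r"
    by (rule tendsto_upperbound) simp
  then show ?thesis
    by (simp add: pairing_def d_def blinfun.bilinear_simps)
qed

lemma pairing_diff_commute: "pairing (x - y) (xs - ys) = pairing (y - x) (ys - xs)"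
  by (simp add: pairing_def blinfun.bilinear_simps)

lemma maximal_monotone_memI:
  assumes T: "maximal_monotone T"
    and related: "\<And>a as. (a, as) \<in> T \<Longrightarrow> 0 \<le> pairing (x - a) (xs - as)"
  shows "(x, xs) \<in> T"
proof -
  have "monotone_op (insert (x, xs) T)"
    using T related pairing_diff_commute[of x _ xs]
    by (auto simp: maximal_monotone_def monotone_op_def pairing_def)
  then show ?thesis
    using T unfolding maximal_monotone_def by blast
qed

lemma effdom_fitzpatrick_finite:
  assumes "h \<in> fitzpatrick_family T" and "z \<in> effdom h"
  shows "h z = ereal (real_of_ereal (h z))"
proof -
  have "ereal (pairing (fst z) (snd z)) \<le> h z"
    using assms(1) by (cases z) (auto simp: fitzpatrick_family_def)
  with assms(2) show ?thesis
    by (cases "h z") (auto simp: effdom_def)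
qed

lemma convex_effdom_fitzpatrick:
  assumes h: "h \<in> fitzpatrick_family T"
  shows "convex (effdom h)"
proof (rule convexI)
  fix z w and u v :: real
  assume "z \<in> effdom h" "w \<in> effdom h" "0 \<le> u" "0 \<le> v" "u + v = 1"
  moreover have epi: "convex {(z, t::real). h z \<le> ereal t}"
    using h by (simp add: fitzpatrick_family_def convex_ext_def)
  moreover have "h z \<le> ereal (real_of_ereal (h z))" "h w \<le> ereal (real_of_ereal (h w))"
    using effdom_fitzpatrick_finite[OF h] \<open>z \<in> effdom h\<close> \<open>w \<in> effdom h\<close> by simp_all
  ultimately have "h (u *\<^sub>R z + v *\<^sub>R w) \<le> ereal (u * real_of_ereal (h z) + v * real_of_ereal (h w))"
    using convexD[OF epi, of "(z, real_of_ereal (h z))" "(w, real_of_ereal (h w))" u v] by simp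
  then show "u *\<^sub>R z + v *\<^sub>R w \<in> effdom h"
    by (auto simp: effdom_def le_less_trans)
qed

lemma graph_subset_effdom_fitzpatrick:
  assumes "h \<in> fitzpatrick_family T"
  shows "T \<subseteq> effdom h"
  using assms by (auto simp: fitzpatrick_family_def effdom_def)

lemma convex_hull_image_subset_effdom_fitzpatrick:
  assumes "h \<in> fitzpatrick_family T" and "linear f"
  shows "convex hull (f ` T) \<subseteq> f ` effdom h"
  using assms graph_subset_effdom_fitzpatrick convex_effdom_fitzpatrick
  by (intro hull_minimal image_mono convex_linear_image) auto

lemma maximal_monotone_shift_mem:
  assumes T: "maximal_monotone T" and h: "h \<in> fitzpatrick_family T"
    and dom: "(x, xs) \<in> effdom h" and "0 < m" and "0 \<le> pairing u us"
    and margin: "\<And>a as. (a, as) \<in> T \<Longrightarrow> m \<le> pairing (x - a) us + pairing u (xs - as)"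
  shows "\<exists>s. (x + s *\<^sub>R u, xs + s *\<^sub>R us) \<in> T"
proof -
  define r where "r = real_of_ereal (h (x, xs))"
  define s where "s = \<bar>r - pairing x xs\<bar> / m"
  have hr: "h (x, xs) \<le> ereal r"
    using effdom_fitzpatrick_finite[OF h dom] by (simp add: r_def)
  have "0 \<le> pairing (x + s *\<^sub>R u - a) (xs + s *\<^sub>R us - as)" if "(a, as) \<in> T" for a as
  proof -
    have "pairing (x + s *\<^sub>R u - a) (xs + s *\<^sub>R us - as) =
        pairing (x - a) (xs - as) + s * (pairing (x - a) us + pairing u (xs - as))
        + s\<^sup>2 * pairing u us"
      by (simp add: pairing_def blinfun.bilinear_simps algebra_simps power2_eq_square)
    moreover have "pairing x xs - r \<le> pairing (x - a) (xs - as)"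
      by (rule fitzpatrick_family_pairing_ge[OF h that hr])
    moreover have "s * m \<le> s * (pairing (x - a) us + pairing u (xs - as))"
      using margin[OF that] \<open>0 < m\<close> by (intro mult_left_mono) (simp_all add: s_def)
    moreover have "s * m = \<bar>r - pairing x xs\<bar>"
      using \<open>0 < m\<close> by (simp add: s_def)
    moreover have "0 \<le> s\<^sup>2 * pairing u us"
      using \<open>0 \<le> pairing u us\<close> by simp
    ultimately show ?thesis
      by linarith
  qed
  then show ?thesis
    by (blast intro: maximal_monotone_memI[OF T])
qed

lemma linear_functional_in_span:
  fixes F :: "'v::real_vector \<Rightarrow> real" and \<phi> :: "'i \<Rightarrow> 'v \<Rightarrow> real"
  assumes "finite I" and "linear F" and "\<And>i. i \<in> I \<Longrightarrow> linear (\<phi> i)"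
    and "\<And>z. (\<And>i. i \<in> I \<Longrightarrow> \<phi> i z = 0) \<Longrightarrow> F z = 0"
  shows "\<exists>c. \<forall>z. F z = (\<Sum>i\<in>I. c i * \<phi> i z)"
  using assms
proof (induction I arbitrary: F rule: finite_induct)
  case empty
  then show ?case
    by simp
next
  case (insert j I)
  show ?case
  proof (cases "\<forall>z. (\<forall>i\<in>I. \<phi> i z = 0) \<longrightarrow> F z = 0")
    case True
    then obtain c where "\<forall>z. F z = (\<Sum>i\<in>I. c i * \<phi> i z)"
      using insert.IH[of F] insert.prems by blast
    then show ?thesis
      using insert.hyps by (intro exI[of _ "c(j := 0)"]) (auto intro!: sum.cong)
  next
    case False
    then obtain z0 where z0: "\<And>i. i \<in> I \<Longrightarrow> \<phi> i z0 = 0" "F z0 \<noteq> 0"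
      by blast
    then have "\<phi> j z0 \<noteq> 0"
      using insert.prems(3)[of z0] by auto
    define G where "G z = F z - \<phi> j z / \<phi> j z0 * F z0" for z
    have lin: "linear F" "linear (\<phi> j)"
      using insert.prems by auto
    have "linear G"
      using lin unfolding G_def
      by (intro linearI) (simp_all add: linear_add linear_scale add_divide_distrib algebra_simps)
    moreover have "G z = 0" if "\<And>i. i \<in> I \<Longrightarrow> \<phi> i z = 0" for z
    proof -
      define z' where "z' = z - (\<phi> j z / \<phi> j z0) *\<^sub>R z0"
      have "\<phi> i z' = 0" if "i \<in> insert j I" for i
      proof -
        have "linear (\<phi> i)"
          using insert.prems(2) that by blast
        then show ?thesis
          using that \<open>\<phi> j z0 \<noteq> 0\<close> z0(1) \<open>\<And>i. i \<in> I \<Longrightarrow> \<phi> i z = 0\<close>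
          by (auto simp: z'_def linear_diff linear_scale)
      qed
      then have "F z' = 0"
        using insert.prems(3) by blast
      then show ?thesis
        using lin by (simp add: z'_def G_def linear_diff linear_scale)
    qed
    ultimately obtain c where c: "\<forall>z. G z = (\<Sum>i\<in>I. c i * \<phi> i z)"
      using insert.IH[of G] insert.prems(2) by blast
    show ?thesis
    proof (intro exI allI)
      fix z
      have "F z = G z + F z0 / \<phi> j z0 * \<phi> j z"
        by (simp add: G_def)
      also have "\<dots> = (\<Sum>i\<in>insert j I. (c(j := F z0 / \<phi> j z0)) i * \<phi> i z)"
        using c insert.hyps by (auto intro!: sum.cong)
      finally show "F z = (\<Sum>i\<in>insert j I. (c(j := F z0 / \<phi> j z0)) i * \<phi> i z)" .
    qed
  qed
qed

lemma notin_weak_star_closureE: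
  fixes xs :: "'a::real_normed_vector \<Rightarrow>\<^sub>L real"
  assumes "xs \<notin> weak_star_closure S"
  obtains Y e where "finite Y" "0 < e" "\<And>k. k \<in> S \<Longrightarrow> e \<le> (\<Sum>y\<in>Y. \<bar>blinfun_apply (k - xs) y\<bar>)"
proof -
  have "topspace (weak_star_topology :: ('a \<Rightarrow>\<^sub>L real) topology) = UNIV"
    by (simp add: weak_star_topology_def topspace_pullback_topology)
  then obtain U where U: "xs \<in> U" "openin weak_star_topology U" "U \<inter> S = {}"
    using assms unfolding weak_star_closure_def in_closure_of by blast
  then obtain V where V: "open V" "U = blinfun_apply -` V"
    unfolding weak_star_topology_def openin_pullback_topology by auto
  then have "openin (product_topology (\<lambda>i. euclidean) UNIV) V" "blinfun_apply xs \<in> V"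
    using U(1) by (auto simp: euclidean_product_topology)
  from product_topology_open_contains_basis[OF this]
  obtain X where X: "blinfun_apply xs \<in> (\<Pi>\<^sub>E i\<in>UNIV. X i)" "\<And>i. open (X i)"
      "finite {i. X i \<noteq> UNIV}" "(\<Pi>\<^sub>E i\<in>UNIV. X i) \<subseteq> V"
    by auto
  define Y where "Y = {i. X i \<noteq> UNIV}"
  have "\<exists>\<epsilon>>0. ball (blinfun_apply xs i) \<epsilon> \<subseteq> X i" for i
    using X(1,2) by (simp add: open_contains_ball PiE_UNIV_domain Pi_iff)
  then obtain \<epsilon> where \<epsilon>: "\<And>i. 0 < \<epsilon> i" "\<And>i. ball (blinfun_apply xs i) (\<epsilon> i) \<subseteq> X i"
    by metis
  define e where "e = Min (insert 1 (\<epsilon> ` Y))"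
  have "finite Y"
    using X(3) by (simp add: Y_def)
  moreover have "0 < e"
    using \<open>finite Y\<close> \<epsilon>(1) by (simp add: e_def)
  moreover have "e \<le> (\<Sum>y\<in>Y. \<bar>blinfun_apply (k - xs) y\<bar>)" if "k \<in> S" for k
  proof -
    have "blinfun_apply k \<notin> (\<Pi>\<^sub>E i\<in>UNIV. X i)"
      using that U(3) V(2) X(4) by blast
    then obtain i where i: "blinfun_apply k i \<notin> X i"
      by (auto simp: PiE_UNIV_domain)
    then have "i \<in> Y"
      by (auto simp: Y_def)
    have "e \<le> \<epsilon> i"
      using \<open>finite Y\<close> \<open>i \<in> Y\<close> by (simp add: e_def)
    also have "\<dots> \<le> \<bar>blinfun_apply (k - xs) i\<bar>"
      using i \<epsilon>(2)[of i] by (force simp: blinfun.diff_left dist_real_def)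
    also have "\<dots> \<le> (\<Sum>y\<in>Y. \<bar>blinfun_apply (k - xs) y\<bar>)"
      using \<open>finite Y\<close> \<open>i \<in> Y\<close> by (intro member_le_sum) auto
    finally show ?thesis .
  qed
  ultimately show ?thesis
    by (rule that)
qed

lemma bounded_linear_if_le_norm:
  fixes F :: "'v::real_normed_vector \<Rightarrow> real"
  assumes "linear F" and "F \<le> norm"
  shows "bounded_linear F"
proof -
  have "\<bar>F x\<bar> \<le> norm x" for x
    using le_funD[OF assms(2), of x] le_funD[OF assms(2), of "- x"] linear_neg[OF assms(1), of x] by simp
  then show ?thesis
    using assms(1) unfolding bounded_linear_def bounded_linear_axioms_def by (metis mult.comm_neutral real_norm_def)
qed

lemma fst_effdom_subset_closure_convex_hull:
  fixes T :: "('a::real_normed_vector \<times> ('a \<Rightarrow>\<^sub>L real)) set"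
  assumes T: "maximal_monotone T" and h: "h \<in> fitzpatrick_family T"
  shows "fst ` effdom h \<subseteq> closure (convex hull (fst ` T))" (is "_ \<subseteq> closure ?K")
proof
  fix x assume "x \<in> fst ` effdom h"
  then obtain xs where dom: "(x, xs) \<in> effdom h"
    by force
  show "x \<in> closure ?K"
  proof (rule ccontr)
    assume "x \<notin> closure ?K"
    then obtain e where "0 < e" and far: "\<And>k. k \<in> ?K \<Longrightarrow> e \<le> norm (x - k)"
      unfolding closure_approachable by (force simp: dist_norm not_less norm_minus_commute)
    then obtain F where F: "linear F" "F \<le> norm" and sep: "\<forall>k\<in>?K. e \<le> F x - F k"
      using sublinear_separation[OF sublinear_norm convex_convex_hull] by blast
    define fs where "fs = Blinfun F"
    have fs: "blinfun_apply fs = F"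
      using bounded_linear_if_le_norm[OF F] by (simp add: fs_def bounded_linear_Blinfun_apply)
    have "\<exists>s. (x + s *\<^sub>R 0, xs + s *\<^sub>R fs) \<in> T"
    proof (rule maximal_monotone_shift_mem[OF T h dom \<open>0 < e\<close>])
      fix a as assume "(a, as) \<in> T"
      then have "a \<in> ?K"
        by (force intro: hull_inc)
      then show "e \<le> pairing (x - a) fs + pairing 0 (xs - as)"
        using sep F(1) by (simp add: pairing_def fs linear_diff)
    qed (simp add: pairing_def)
    then have "x \<in> ?K"
      by (force intro: hull_inc)
    then show False
      using sep \<open>0 < e\<close> by auto
  qed
qed

lemma snd_effdom_subset_weak_star_closure_convex_hull:
  fixes T :: "('a::real_normed_vector \<times> ('a \<Rightarrow>\<^sub>L real)) set"
  assumes T: "maximal_monotone T" and h: "h \<in> fitzpatrick_family T"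
  shows "snd ` effdom h \<subseteq> weak_star_closure (convex hull (snd ` T))" (is "_ \<subseteq> weak_star_closure ?K")
proof
  fix xs assume "xs \<in> snd ` effdom h"
  then obtain x where dom: "(x, xs) \<in> effdom h"
    by force
  show "xs \<in> weak_star_closure ?K"
  proof (rule ccontr)
    assume "xs \<notin> weak_star_closure ?K"
    then obtain Y e where "finite Y" "0 < e"
      and far: "\<And>k. k \<in> ?K \<Longrightarrow> e \<le> (\<Sum>y\<in>Y. \<bar>blinfun_apply (k - xs) y\<bar>)"
      by (rule notin_weak_star_closureE) blast
    define P where "P z = (\<Sum>y\<in>Y. \<bar>blinfun_apply z y\<bar>)" for z :: "'a \<Rightarrow>\<^sub>L real"
    have eval_linear: "linear (\<lambda>z. blinfun_apply z y)" for y :: 'a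
      by (simp add: bounded_linear.linear blinfun.bounded_linear_left)
    have "sublinear P"
      unfolding P_def by (rule sublinear_sum_abs) (rule eval_linear)
    moreover have "e \<le> P (xs - k)" if "k \<in> ?K" for k
      using far[OF that] by (simp add: P_def blinfun.diff_left abs_minus_commute)
    ultimately obtain F where F: "linear F" "F \<le> P" and sep: "\<forall>k\<in>?K. e \<le> F xs - F k"
      using sublinear_separation[OF _ convex_convex_hull] by blast
    have "F z = 0" if "\<And>y. y \<in> Y \<Longrightarrow> blinfun_apply z y = 0" for z
      using le_funD[OF F(2), of z] le_funD[OF F(2), of "- z"] linear_neg[OF F(1), of z] that
      by (simp add: P_def blinfun.minus_left)
    then obtain c where c: "\<forall>z. F z = (\<Sum>y\<in>Y. c y * blinfun_apply z y)"
      using linear_functional_in_span[of Y F "\<lambda>y z. blinfun_apply z y"] \<open>finite Y\<close> F(1) eval_linear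
      by blast
    define w where "w = (\<Sum>y\<in>Y. c y *\<^sub>R y)"
    have Fw: "F z = blinfun_apply z w" for z
      using c by (simp add: w_def blinfun.sum_right blinfun.scaleR_right)
    have "\<exists>s. (x + s *\<^sub>R w, xs + s *\<^sub>R 0) \<in> T"
    proof (rule maximal_monotone_shift_mem[OF T h dom \<open>0 < e\<close>])
      fix a as assume "(a, as) \<in> T"
      then have "as \<in> ?K"
        by (force intro: hull_inc)
      then show "e \<le> pairing (x - a) 0 + pairing w (xs - as)"
        using sep by (simp add: pairing_def Fw blinfun.diff_left)
    qed (simp add: pairing_def)
    then have "xs \<in> ?K"
      by (force intro: hull_inc)
    then show False
      using sep \<open>0 < e\<close> by auto
  qed
qed

theorem lemma4p1:
  fixes T :: "('a::banach \<times> ('a \<Rightarrow>\<^sub>L real)) set"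
    and h :: "('a \<times> ('a \<Rightarrow>\<^sub>L real)) \<Rightarrow> ereal"
  assumes "maximal_monotone T"
    and "h \<in> fitzpatrick_family T"
  shows "closure (fst ` effdom h) = closure (convex hull (fst ` T)) \<and>
         weak_star_closure (snd ` effdom h) = weak_star_closure (convex hull (snd ` T))"
proof
  have "convex hull (fst ` T) \<subseteq> fst ` effdom h"
    using assms(2) linear_fst by (rule convex_hull_image_subset_effdom_fitzpatrick)
  with fst_effdom_subset_closure_convex_hull[OF assms]
  show "closure (fst ` effdom h) = closure (convex hull (fst ` T))"
    by (metis antisym closed_closure closure_minimal closure_mono)
next
  have "convex hull (snd ` T) \<subseteq> snd ` effdom h"
    using assms(2) linear_snd by (rule convex_hull_image_subset_effdom_fitzpatrick)
  with snd_effdom_subset_weak_star_closure_convex_hull[OF assms]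
  show "weak_star_closure (snd ` effdom h) = weak_star_closure (convex hull (snd ` T))"
    unfolding weak_star_closure_def
    by (metis antisym closedin_closure_of closure_of_minimal closure_of_mono)
qed

end
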